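(* Let $(X_t,\mathcal F_t)_{t\ge0}$ be a martingale with $X_0=0$, and assume $Y_t:=X_t-X_{t-1}\le b$ almost surely for all $t$, for some $b>0$. Let $V_T=\sum_{t=1}^T\mathbb E[Y_t^2\mid\mathcal F_{t-1}]$ and, for $\lambda\in(0,1/b)$, $M_T(\lambda)=\exp\left\{\lambda X_T-\frac{\lambda^2V_T}{1-\lambda b}\right\}$. Then for any $\mathcal F_{T-1}$-measurable $x,v>0$ and all $\lambda\in(0,1/b)$, almost surely $$\mathbb P\left(X_T\ge x\ \text{and}\ V_T\le v\,\middle|\,\mathcal F_{T-1}\right)\le M_{T-1}(\lambda)\exp\left\{-\lambda x+\frac{\lambda^2v}{1-\lambda b}\right\}.$$ *)

theory Defs
  imports "HOL-Probability.Probability"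
begin

definition discrete_filtration :: "'a measure \<Rightarrow> (nat \<Rightarrow> 'a measure) \<Rightarrow> bool" where
  "discrete_filtration M F \<longleftrightarrow>
     (\<forall>t. subalgebra M (F t)) \<and> (\<forall>s t. s \<le> t \<longrightarrow> sets (F s) \<subseteq> sets (F t))"

definition martingale :: "'a measure \<Rightarrow> (nat \<Rightarrow> 'a measure) \<Rightarrow> (nat \<Rightarrow> 'a \<Rightarrow> real) \<Rightarrow> bool" where
  "martingale M F X \<longleftrightarrow> prob_space M \<and> discrete_filtration M F \<and>
     (\<forall>t. integrable M (X t) \<and> X t \<in> borel_measurable (F t)) \<and>
     (\<forall>t. AE \<omega> in M. real_cond_exp M (F t) (X (Suc t)) \<omega> = X t \<omega>)"

definition incr :: "(nat \<Rightarrow> 'a \<Rightarrow> real) \<Rightarrow> nat \<Rightarrow> 'a \<Rightarrow> real" where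
  "incr X t \<omega> = X t \<omega> - X (t - 1) \<omega>"

text \<open>Predictable quadratic variation V_T = sum_{t=1}^T E[Y_t^2 | F_{t-1}],
  taken in [0,\<infinity>] (nonnegative conditional expectation), so that it is
  well-defined without extra integrability assumptions.\<close>
definition pqv :: "'a measure \<Rightarrow> (nat \<Rightarrow> 'a measure) \<Rightarrow> (nat \<Rightarrow> 'a \<Rightarrow> real) \<Rightarrow> nat \<Rightarrow> 'a \<Rightarrow> ennreal" where
  "pqv M F X T \<omega> = (\<Sum>t=1..T. nn_cond_exp M (F (t - 1)) (\<lambda>\<eta>. ennreal ((incr X t \<eta>)\<^sup>2)) \<omega>)"

text \<open>M_T(\<lambda>) = exp(\<lambda> X_T - \<lambda>^2 V_T / (1 - \<lambda> b)), with the natural convention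
  exp(-\<infinity>) = 0 when V_T = \<infinity>.\<close>
definition expmart :: "'a measure \<Rightarrow> (nat \<Rightarrow> 'a measure) \<Rightarrow> (nat \<Rightarrow> 'a \<Rightarrow> real) \<Rightarrow> real \<Rightarrow> real \<Rightarrow> nat \<Rightarrow> 'a \<Rightarrow> real" where
  "expmart M F X b l T \<omega> =
     (if pqv M F X T \<omega> = \<infinity> then 0
      else exp (l * X T \<omega> - l\<^sup>2 * enn2real (pqv M F X T \<omega>) / (1 - l * b)))"

end

theory Submission
  imports Defs
begin

text \<open>Write \<open>c = \<lambda>\<^sup>2 / (1 - \<lambda> b)\<close>. On the event \<open>X\<^sub>T \<ge> x, V\<^sub>T \<le> v\<close> we have
  \<open>1 \<le> exp (\<lambda> (X\<^sub>T - x) + c (v - V\<^sub>T))\<close>, and \<open>exp (\<lambda> X\<^sub>T - c V\<^sub>T) = M\<^sub>T\<^sub>-\<^sub>1(\<lambda>) exp (\<lambda> Y\<^sub>T - c Q)\<close>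
  with \<open>Q = E[Y\<^sub>T\<^sup>2 | \<F>\<^sub>T\<^sub>-\<^sub>1]\<close>. Pulling the \<open>\<F>\<^sub>T\<^sub>-\<^sub>1\<close>-measurable factors out of the conditional
  expectation, it remains to bound \<open>E[exp (\<lambda> Y\<^sub>T) | \<F>\<^sub>T\<^sub>-\<^sub>1] \<le> 1 + c Q \<le> exp (c Q)\<close>. This follows
  from \<open>exp u \<le> 1 + u + u\<^sup>2\<close> for \<open>u \<le> 1\<close>, applied to \<open>u = \<lambda> Y\<^sub>T \<le> \<lambda> b < 1\<close>, since the linear
  term has vanishing conditional mean. As \<open>Y\<^sub>T\<^sup>2\<close> need not be integrable, all conditional
  expectations of nonnegative quantities are taken in \<open>[0, \<infinity>]\<close>; the linear term is then
  removed by cancelling the conditional expectations of its positive and negative parts.\<close>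

lemma exp_le_one_plus_plus_square:
  fixes u :: real
  assumes "u \<le> 1"
  shows "exp u \<le> 1 + u + u\<^sup>2"
proof (cases "0 \<le> u")
  case True
  then show ?thesis using exp_bound assms by blast
next
  case False
  define t where "t = - u"
  have t: "0 \<le> t" using False t_def by simp
  have pos: "0 < 1 - t + t\<^sup>2"
    using zero_le_power2[of "t - 1 / 2"] by (simp add: power2_eq_square algebra_simps)
  have "(1 + t + t\<^sup>2 / 2) * (1 - t + t\<^sup>2) = 1 + (t\<^sup>2 + t ^ 3 + t ^ 4) / 2"
    by (simp add: power2_eq_square power3_eq_cube power4_eq_xxxx field_simps)
  then have "1 \<le> (1 + t + t\<^sup>2 / 2) * (1 - t + t\<^sup>2)"
    using t by simp
  also have "\<dots> \<le> exp t * (1 - t + t\<^sup>2)"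
    using exp_lower_Taylor_quadratic[OF t] pos by (intro mult_right_mono) auto
  finally have "exp (- t) \<le> 1 - t + t\<^sup>2"
    by (simp add: exp_minus field_simps)
  then show ?thesis by (simp add: t_def)
qed

lemma exp_mult_le_Bernstein:
  fixes y b l :: real
  assumes "y \<le> b" "0 \<le> b" "0 < l" "l * b < 1"
  shows "exp (l * y) \<le> 1 + l * y + l\<^sup>2 / (1 - l * b) * y\<^sup>2"
proof -
  have "l * y \<le> 1"
    using assms mult_left_mono[of y b l] by linarith
  then have "exp (l * y) \<le> 1 + l * y + l\<^sup>2 * y\<^sup>2"
    using exp_le_one_plus_plus_square[of "l * y"] by (simp add: power_mult_distrib)
  also have "(1 - l * b) * (l\<^sup>2 * y\<^sup>2) \<le> l\<^sup>2 * y\<^sup>2"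
    using assms by (intro mult_left_le_one_le) auto
  then have "l\<^sup>2 * y\<^sup>2 \<le> l\<^sup>2 * y\<^sup>2 / (1 - l * b)"
    using assms by (simp add: le_divide_eq mult_ac)
  finally show ?thesis by simp
qed

lemma ennreal_plus_neg_le_plus:
  fixes f g h :: real
  assumes "0 \<le> g" "g \<le> f + h"
  shows "ennreal g + ennreal (- f) \<le> ennreal h + ennreal f"
proof (cases "0 \<le> f")
  case True
  have "ennreal g \<le> ennreal (h + f)"
    using assms by (intro ennreal_leI) simp
  also have "\<dots> \<le> ennreal h + ennreal f"
    using True by (cases "0 \<le> h") (auto simp: ennreal_plus ennreal_neg intro: ennreal_leI)
  finally show ?thesis using True by (simp add: ennreal_neg)
next
  case False
  have "ennreal g + ennreal (- f) = ennreal (g - f)"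
    using assms False by (simp add: ennreal_plus[symmetric])
  also have "\<dots> \<le> ennreal h"
    using assms by (intro ennreal_leI) simp
  finally show ?thesis using False by (simp add: ennreal_neg add_increasing2)
qed

lemma one_le_Freedman_weight:
  fixes s y x v l c :: real and w q :: ennreal
  assumes "x \<le> s + y" "w + q \<le> ennreal v" "0 \<le> v" "0 \<le> l" "0 \<le> c"
  shows "1 \<le> (if w = \<infinity> then 0 else exp (l * s - c * enn2real w)) * exp (- l * x + c * v)
    * (if q = \<infinity> then 0 else exp (- c * enn2real q)) * exp (l * y)"
proof -
  have fin: "w \<noteq> \<infinity>" "q \<noteq> \<infinity>"
    using assms(2) by (auto simp: top_unique)
  obtain a d where ad: "w = ennreal a" "q = ennreal d" "0 \<le> a" "0 \<le> d"
    using fin by (cases w; cases q) auto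
  then have wq: "enn2real w + enn2real q \<le> v"
    using assms(2,3) by (simp add: ennreal_plus[symmetric] del: ennreal_plus)
  have "0 \<le> l * (s + y - x) + c * (v - (enn2real w + enn2real q))"
    using assms(1,4,5) wq by simp
  also have "\<dots> = (l * s - c * enn2real w) + (- l * x + c * v) + (- c * enn2real q) + l * y"
    by (simp add: algebra_simps)
  finally show ?thesis
    using fin by (simp add: exp_add[symmetric])
qed

lemma ennreal_exp_neg_mult_one_plus_le_one:
  fixes c :: real and q :: ennreal
  assumes "0 \<le> c"
  shows "ennreal (if q = \<infinity> then 0 else exp (- c * enn2real q)) * (1 + ennreal c * q) \<le> 1"
proof (cases "q = \<infinity>")
  case False
  then have "ennreal (exp (- c * enn2real q)) * (1 + ennreal c * q)
      = ennreal (exp (- c * enn2real q) * (1 + c * enn2real q))"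
    using assms by (simp add: ennreal_mult ennreal_enn2real_if)
  also have "\<dots> \<le> ennreal (exp (- c * enn2real q) * exp (c * enn2real q))"
    by (intro ennreal_leI mult_left_mono) auto
  also have "\<dots> = 1"
    by (simp add: exp_add[symmetric])
  finally show ?thesis using False by simp
qed simp

context sigma_finite_subalgebra
begin

lemma nn_cond_exp_finite:
  assumes "integrable M f"
  shows "AE x in M. nn_cond_exp M F (\<lambda>x. ennreal (f x)) x \<noteq> \<infinity>"
proof -
  have [measurable]: "f \<in> borel_measurable M" using assms by auto
  have "(\<integral>\<^sup>+ x. 1 * nn_cond_exp M F (\<lambda>x. ennreal (f x)) x \<partial>M) = (\<integral>\<^sup>+ x. 1 * ennreal (f x) \<partial>M)"
    by (rule nn_cond_exp_intg) auto
  then have "(\<integral>\<^sup>+ x. nn_cond_exp M F (\<lambda>x. ennreal (f x)) x \<partial>M) \<noteq> \<infinity>"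
    using integrableD(2)[OF assms] by simp
  then show ?thesis by (intro nn_integral_PInf_AE) auto
qed

lemma nn_cond_exp_const: "AE x in M. nn_cond_exp M F (\<lambda>x. c) x = c"
  using nn_cond_exp_F_meas[of "\<lambda>x. c"] by (auto elim: AE_mp)

lemma real_cond_exp_nonneg_eq_nn_cond_exp:
  assumes "\<And>x. 0 \<le> f x"
  shows "AE x in M. real_cond_exp M F f x = enn2real (nn_cond_exp M F (\<lambda>x. ennreal (f x)) x)"
proof -
  have "(\<lambda>x. ennreal (- f x)) = (\<lambda>x. 0)"
    using assms by (simp add: fun_eq_iff ennreal_neg)
  then have "AE x in M. nn_cond_exp M F (\<lambda>x. ennreal (- f x)) x = 0"
    using nn_cond_exp_const[of 0] by simp
  then show ?thesis
    unfolding real_cond_exp_def by eventually_elim simp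
qed

lemma nn_cond_exp_pos_part_eq_neg_part:
  assumes "integrable M f" "AE x in M. real_cond_exp M F f x = 0"
  shows "AE x in M. nn_cond_exp M F (\<lambda>x. ennreal (f x)) x = nn_cond_exp M F (\<lambda>x. ennreal (- f x)) x
    \<and> nn_cond_exp M F (\<lambda>x. ennreal (f x)) x \<noteq> \<infinity>"
proof -
  define P where "P = nn_cond_exp M F (\<lambda>x. ennreal (f x))"
  define N where "N = nn_cond_exp M F (\<lambda>x. ennreal (- f x))"
  have "AE x in M. N x \<noteq> \<infinity>"
    unfolding N_def using assms(1) by (intro nn_cond_exp_finite) auto
  moreover have "AE x in M. P x \<noteq> \<infinity>"
    unfolding P_def using assms(1) by (rule nn_cond_exp_finite)
  ultimately have "AE x in M. P x = N x \<and> P x \<noteq> \<infinity>"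
    using assms(2)
  proof eventually_elim
    case (elim x)
    have "P x = ennreal (enn2real (P x))"
      using elim by (simp add: ennreal_enn2real_if)
    also have "\<dots> = ennreal (enn2real (N x))"
      using elim(3) by (simp add: real_cond_exp_def P_def N_def)
    also have "\<dots> = N x"
      using elim by (simp add: ennreal_enn2real_if)
    finally show ?case using elim by simp
  qed
  then show ?thesis by (simp add: P_def N_def)
qed

lemma nn_cond_exp_le_of_le_plus_centered:
  fixes f g h :: "'a \<Rightarrow> real"
  assumes f: "integrable M f" "AE x in M. real_cond_exp M F f x = 0"
    and [measurable]: "g \<in> borel_measurable M" "h \<in> borel_measurable M"
    and g_nonneg: "AE x in M. 0 \<le> g x" and g_le: "AE x in M. g x \<le> f x + h x"
  shows "AE x in M. nn_cond_exp M F (\<lambda>x. ennreal (g x)) x \<le> nn_cond_exp M F (\<lambda>x. ennreal (h x)) x"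
proof -
  have [measurable]: "f \<in> borel_measurable M" using f(1) by auto
  let ?E = "\<lambda>u. nn_cond_exp M F (\<lambda>x. ennreal (u x))"
  have "AE x in M. ennreal (g x) + ennreal (- f x) \<le> ennreal (h x) + ennreal (f x)"
    using g_nonneg g_le by eventually_elim (rule ennreal_plus_neg_le_plus)
  then have "AE x in M. nn_cond_exp M F (\<lambda>x. ennreal (g x) + ennreal (- f x)) x
      \<le> nn_cond_exp M F (\<lambda>x. ennreal (h x) + ennreal (f x)) x"
    by (rule nn_cond_exp_mono) auto
  moreover have "AE x in M. ?E g x + ?E (\<lambda>x. - f x) x
      = nn_cond_exp M F (\<lambda>x. ennreal (g x) + ennreal (- f x)) x"
    by (rule nn_cond_exp_sum) auto
  moreover have "AE x in M. ?E h x + ?E f x = nn_cond_exp M F (\<lambda>x. ennreal (h x) + ennreal (f x)) x"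
    by (rule nn_cond_exp_sum) auto
  moreover note nn_cond_exp_pos_part_eq_neg_part[OF f]
  ultimately show ?thesis
  proof eventually_elim
    case (elim x)
    then have "?E f x + ?E g x \<le> ?E f x + ?E h x"
      by (simp add: ac_simps)
    with elim(4) show ?case
      using ennreal_add_left_cancel_le by blast
  qed
qed

lemma nn_cond_exp_exp_le_Bernstein:
  fixes Y :: "'a \<Rightarrow> real"
  assumes Y: "integrable M Y" "AE x in M. real_cond_exp M F Y x = 0"
    and Y_le: "AE x in M. Y x \<le> b"
    and "0 \<le> b" "0 < l" "l * b < 1"
  shows "AE x in M. nn_cond_exp M F (\<lambda>x. ennreal (exp (l * Y x))) x
    \<le> 1 + ennreal (l\<^sup>2 / (1 - l * b)) * nn_cond_exp M F (\<lambda>x. ennreal ((Y x)\<^sup>2)) x"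
proof -
  define c where "c = l\<^sup>2 / (1 - l * b)"
  have c: "0 \<le> c" using assms by (simp add: c_def)
  have [measurable]: "Y \<in> borel_measurable M" using Y(1) by auto
  have split: "(\<lambda>x. ennreal (1 + c * (Y x)\<^sup>2)) = (\<lambda>x. 1 + ennreal c * ennreal ((Y x)\<^sup>2))"
    using c by (simp add: fun_eq_iff ennreal_plus ennreal_mult)
  have "AE x in M. real_cond_exp M F (\<lambda>x. l * Y x) x = 0"
    using real_cond_exp_cmult[OF Y(1), of l] Y(2) by eventually_elim simp
  moreover have "AE x in M. exp (l * Y x) \<le> l * Y x + (1 + c * (Y x)\<^sup>2)"
    using Y_le
  proof eventually_elim
    case (elim x)
    show ?case
      using exp_mult_le_Bernstein[OF elim assms(4-6)] by (simp add: c_def)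
  qed
  ultimately have "AE x in M. nn_cond_exp M F (\<lambda>x. ennreal (exp (l * Y x))) x
      \<le> nn_cond_exp M F (\<lambda>x. ennreal (1 + c * (Y x)\<^sup>2)) x"
    using Y(1) by (intro nn_cond_exp_le_of_le_plus_centered) auto
  moreover have "AE x in M. 1 + nn_cond_exp M F (\<lambda>x. ennreal c * ennreal ((Y x)\<^sup>2)) x
      = nn_cond_exp M F (\<lambda>x. ennreal (1 + c * (Y x)\<^sup>2)) x"
    unfolding split using nn_cond_exp_sum[of "\<lambda>x. 1" "\<lambda>x. ennreal c * ennreal ((Y x)\<^sup>2)"] nn_cond_exp_const[of 1]
    by (auto elim: AE_mp)
  moreover have "AE x in M. ennreal c * nn_cond_exp M F (\<lambda>x. ennreal ((Y x)\<^sup>2)) x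
      = nn_cond_exp M F (\<lambda>x. ennreal c * ennreal ((Y x)\<^sup>2)) x"
    by (rule nn_cond_exp_prod) auto
  ultimately show ?thesis
    unfolding c_def[symmetric] by eventually_elim simp
qed

lemma real_cond_exp_indicator_le_Freedman:
  fixes S Y x v :: "'a \<Rightarrow> real" and W :: "'a \<Rightarrow> ennreal"
  assumes Y: "integrable M Y" "AE \<omega> in M. real_cond_exp M F Y \<omega> = 0"
    and Y_le: "AE \<omega> in M. Y \<omega> \<le> b" and b: "0 \<le> b" and l: "0 < l" "l * b < 1"
    and meas [measurable]: "S \<in> borel_measurable F" "W \<in> borel_measurable F"
      "x \<in> borel_measurable F" "v \<in> borel_measurable F"
    and v_nonneg: "\<And>\<omega>. \<omega> \<in> space M \<Longrightarrow> 0 \<le> v \<omega>"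
  defines "Q \<equiv> nn_cond_exp M F (\<lambda>\<eta>. ennreal ((Y \<eta>)\<^sup>2))"
  shows "AE \<omega> in M.
    real_cond_exp M F (indicator {\<eta> \<in> space M. x \<eta> \<le> S \<eta> + Y \<eta> \<and> W \<eta> + Q \<eta> \<le> ennreal (v \<eta>)}) \<omega>
    \<le> (if W \<omega> = \<infinity> then 0 else exp (l * S \<omega> - l\<^sup>2 * enn2real (W \<omega>) / (1 - l * b)))
      * exp (- l * x \<omega> + l\<^sup>2 * v \<omega> / (1 - l * b))"
    (is "AE \<omega> in M. real_cond_exp M F (indicator ?A) \<omega> \<le> ?R \<omega>")
proof -
  define c where "c = l\<^sup>2 / (1 - l * b)"
  define E where "E = (\<lambda>\<omega>. if Q \<omega> = \<infinity> then 0 else exp (- c * enn2real (Q \<omega>)))"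
  have c: "0 \<le> c" using l by (simp add: c_def)
  have c_mult: "l\<^sup>2 * r / (1 - l * b) = c * r" for r by (simp add: c_def)
  have R_nonneg: "0 \<le> ?R \<omega>" for \<omega> by simp
  have [measurable]: "Y \<in> borel_measurable M" using Y(1) by auto
  have "?R \<in> borel_measurable F" "E \<in> borel_measurable F"
    unfolding E_def Q_def by measurable
  note [measurable] = this meas[THEN measurable_from_subalg[OF subalg]]
    this[THEN measurable_from_subalg[OF subalg]]
  have [measurable]: "?A \<in> sets M"
    unfolding Q_def by measurable
  have "ennreal (indicator ?A \<omega>) \<le> ennreal (?R \<omega>) * ennreal (E \<omega>) * ennreal (exp (l * Y \<omega>))"
    if "\<omega> \<in> space M" for \<omega>
  proof (cases "\<omega> \<in> ?A")
    case True
    have E_nonneg: "0 \<le> E \<omega>" by (simp add: E_def)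
    have "1 \<le> ?R \<omega> * E \<omega> * exp (l * Y \<omega>)"
      unfolding E_def c_mult
      by (rule one_le_Freedman_weight) (use True v_nonneg[OF that] l c in auto)
    then show ?thesis
      using True R_nonneg E_nonneg by (simp add: ennreal_mult[symmetric])
  qed simp
  then have "AE \<omega> in M. nn_cond_exp M F (\<lambda>\<eta>. ennreal (indicator ?A \<eta>)) \<omega>
      \<le> nn_cond_exp M F (\<lambda>\<eta>. ennreal (?R \<eta>) * ennreal (E \<eta>) * ennreal (exp (l * Y \<eta>))) \<omega>"
    by (intro nn_cond_exp_mono AE_I2) auto
  moreover have "AE \<omega> in M. ennreal (?R \<omega>) * ennreal (E \<omega>) * nn_cond_exp M F (\<lambda>\<eta>. ennreal (exp (l * Y \<eta>))) \<omega>
      = nn_cond_exp M F (\<lambda>\<eta>. ennreal (?R \<eta>) * ennreal (E \<eta>) * ennreal (exp (l * Y \<eta>))) \<omega>"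
    by (rule nn_cond_exp_prod) auto
  moreover note nn_cond_exp_exp_le_Bernstein[OF Y Y_le b l]
  moreover have "AE \<omega> in M. real_cond_exp M F (indicator ?A) \<omega>
      = enn2real (nn_cond_exp M F (\<lambda>\<eta>. ennreal (indicator ?A \<eta>)) \<omega>)"
    by (rule real_cond_exp_nonneg_eq_nn_cond_exp) simp
  ultimately show ?thesis
  proof eventually_elim
    case (elim \<omega>)
    have "nn_cond_exp M F (\<lambda>\<eta>. ennreal (indicator ?A \<eta>)) \<omega>
        \<le> ennreal (?R \<omega>) * (ennreal (E \<omega>) * (1 + ennreal c * Q \<omega>))"
      using elim(1,2) mult_left_mono[OF elim(3), of "ennreal (?R \<omega>) * ennreal (E \<omega>)"]
      by (simp add: Q_def c_def ac_simps)
    also have "\<dots> \<le> ennreal (?R \<omega>)"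
      using mult_left_mono[OF ennreal_exp_neg_mult_one_plus_le_one[OF c, of "Q \<omega>"]]
      by (simp add: E_def)
    finally show ?case
      using elim(4) by (simp add: enn2real_leI)
  qed
qed

end

lemma discrete_filtration_subalgebra:
  assumes "discrete_filtration M F" "s \<le> t"
  shows "subalgebra (F t) (F s)"
  using assms unfolding discrete_filtration_def subalgebra_def by auto

lemma borel_measurable_pqv:
  assumes "discrete_filtration M F"
  shows "pqv M F X n \<in> borel_measurable (F n)"
  unfolding pqv_def
proof (rule borel_measurable_sum)
  fix t assume "t \<in> {1..n}"
  then have "subalgebra (F n) (F (t - 1))"
    using assms by (intro discrete_filtration_subalgebra) auto
  then show "nn_cond_exp M (F (t - 1)) (\<lambda>\<eta>. ennreal ((incr X t \<eta>)\<^sup>2)) \<in> borel_measurable (F n)"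
    by (rule measurable_from_subalg) simp
qed

lemma pqv_Suc:
  "pqv M F X (Suc n) \<omega> = pqv M F X n \<omega> + nn_cond_exp M (F n) (\<lambda>\<eta>. ennreal ((incr X (Suc n) \<eta>)\<^sup>2)) \<omega>"
  by (simp add: pqv_def sum.cl_ivl_Suc)

lemma martingale_finite_measure_subalgebra:
  assumes "martingale M F X"
  shows "finite_measure_subalgebra M (F n)"
proof -
  interpret prob_space M using assms by (simp add: martingale_def)
  show ?thesis
    using assms by unfold_locales (simp add: martingale_def discrete_filtration_def)
qed

lemma martingale_incr_centered:
  assumes "martingale M F X"
  shows "AE \<omega> in M. real_cond_exp M (F n) (incr X (Suc n)) \<omega> = 0"
proof -
  interpret finite_measure_subalgebra M "F n"
    using assms by (rule martingale_finite_measure_subalgebra)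
  have int: "integrable M (X (Suc n))" "integrable M (X n)" and meas: "X n \<in> borel_measurable (F n)"
    using assms by (auto simp: martingale_def)
  have "AE \<omega> in M. real_cond_exp M (F n) (\<lambda>\<eta>. X (Suc n) \<eta> - X n \<eta>) \<omega>
      = real_cond_exp M (F n) (X (Suc n)) \<omega> - real_cond_exp M (F n) (X n) \<omega>"
    using int by (rule real_cond_exp_diff)
  moreover have "AE \<omega> in M. real_cond_exp M (F n) (X (Suc n)) \<omega> = X n \<omega>"
    using assms by (simp add: martingale_def)
  moreover have "AE \<omega> in M. real_cond_exp M (F n) (X n) \<omega> = X n \<omega>"
    using int(2) meas by (rule real_cond_exp_F_meas)
  ultimately show ?thesis
    unfolding incr_def by eventually_elim simp
qed

theorem lemma9:
  fixes M :: "'a measure" and F :: "nat \<Rightarrow> 'a measure" and X :: "nat \<Rightarrow> 'a \<Rightarrow> real"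
    and b l :: real and T :: nat and x v :: "'a \<Rightarrow> real"
  assumes mart: "martingale M F X"
    and X0: "AE \<omega> in M. X 0 \<omega> = 0"
    and b_pos: "b > 0"
    and incr_bd: "\<And>t. t \<ge> 1 \<Longrightarrow> AE \<omega> in M. incr X t \<omega> \<le> b"
    and T_pos: "T \<ge> 1"
    and x_meas: "x \<in> borel_measurable (F (T - 1))"
    and v_meas: "v \<in> borel_measurable (F (T - 1))"
    and x_pos: "\<And>\<omega>. \<omega> \<in> space M \<Longrightarrow> x \<omega> > 0"
    and v_pos: "\<And>\<omega>. \<omega> \<in> space M \<Longrightarrow> v \<omega> > 0"
    and l_pos: "l > 0" and l_lt: "l < 1 / b"
  shows "AE \<omega> in M.
           real_cond_exp M (F (T - 1))
             (indicator {\<eta> \<in> space M. X T \<eta> \<ge> x \<eta> \<and> pqv M F X T \<eta> \<le> ennreal (v \<eta>)}) \<omega>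
         \<le> expmart M F X b l (T - 1) \<omega> * exp (- l * x \<omega> + l\<^sup>2 * v \<omega> / (1 - l * b))"
proof -
  obtain n where T: "T = Suc n" using T_pos by (cases T) auto
  interpret finite_measure_subalgebra M "F n"
    using mart by (rule martingale_finite_measure_subalgebra)
  have "integrable M (incr X (Suc n))"
    using mart by (auto simp: martingale_def incr_def[abs_def])
  moreover have "X n \<in> borel_measurable (F n)" "pqv M F X n \<in> borel_measurable (F n)"
    using mart by (auto simp: martingale_def borel_measurable_pqv)
  moreover have "0 \<le> b" "l * b < 1"
    using b_pos l_lt by (simp_all add: field_simps)
  ultimately have "AE \<omega> in M. real_cond_exp M (F n) (indicator {\<eta> \<in> space M.
        x \<eta> \<le> X n \<eta> + incr X (Suc n) \<eta> \<and> pqv M F X (Suc n) \<eta> \<le> ennreal (v \<eta>)}) \<omega>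
      \<le> expmart M F X b l n \<omega> * exp (- l * x \<omega> + l\<^sup>2 * v \<omega> / (1 - l * b))"
    unfolding pqv_Suc expmart_def
    using martingale_incr_centered[OF mart, of n] incr_bd[OF T_pos] l_pos x_meas v_meas v_pos
    by (intro real_cond_exp_indicator_le_Freedman) (simp_all add: T less_imp_le)
  then show ?thesis
    by (simp add: T incr_def)
qed

end
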